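(* Let $A,B$ be integers with $A>4$ and $B>2A$, let $n\ge 1$, and let $(a_i,b_i)$, $i=0,1,\dots,n+1$, be integers with $a_0=b_0=A$, such that $s_i:=a_{i+1}-a_i\ge 0$ and $t_i:=b_{i+1}-b_i\ge 0$ for $i=0,\dots,n$, and such that $\min(a_1,b_1)\in[A,A+3]$, $a_n+b_n\le B$ and $a_{n+1}+b_{n+1}>B$. Then for any $q>0$ and any positive, smooth, convex, decreasing function $g:(0,\infty)\to(0,\infty)$, $$ \sum_{i=0}^n\big[s_i\,g(b_iq)+t_i\,g(a_iq)\big]\ge \frac 2q\int_{Aq}^{Bq}g\;-\;2B\,g(Bq/2). $$ *)

theory Defs
  imports "HOL-Analysis.Analysis"
begin

definition smooth_on :: "real set \<Rightarrow> (real \<Rightarrow> real) \<Rightarrow> bool" where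
  "smooth_on S f \<longleftrightarrow> (\<forall>k. \<forall>x\<in>S. ((deriv ^^ k) f) differentiable (at x))"

end

theory Submission imports Defs begin

text \<open>For \<open>g\<close> positive, convex and decreasing consider the potential
  \<open>\<Phi>(x, y) = 2 \<integral>\<^sub>c\<^sup>m g + \<bar>x - y\<bar> g(m)\<close> with \<open>m = min x y\<close>. Raising \<open>x\<close> to \<open>x'\<close>
  increases \<open>\<Phi>\<close> by at most \<open>(x' - x) g(y)\<close>; this is the tangent inequality for \<open>g\<close>.
  Hence along monotone lattice paths the weighted sum \<open>\<Sum> \<Delta>x\<^sub>i g(y\<^sub>i) + \<Delta>y\<^sub>i g(x\<^sub>i)\<close>
  dominates the total increase of \<open>\<Phi>\<close>, and once \<open>x + y \<ge> P\<close> the potential is at least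
  \<open>2 \<integral>\<^sub>c\<^sup>P g - P g(P/2)\<close>. Rescaling by \<open>q\<close> gives the theorem.\<close>

locale convex_decreasing_weight =
  fixes g :: "real \<Rightarrow> real" and c :: real
  assumes pos: "\<And>x. x > 0 \<Longrightarrow> g x > 0"
    and convex: "convex_on {0<..} g"
    and antimono: "antimono_on {0<..} g"
    and differentiable: "\<And>x. x > 0 \<Longrightarrow> g differentiable (at x)"
    and base_pos: "c > 0"
begin

definition primitive :: "real \<Rightarrow> real" where
  "primitive u = integral {c..u} g"

definition potential :: "real \<Rightarrow> real \<Rightarrow> real" where
  "potential x y = 2 * primitive (min x y) + \<bar>x - y\<bar> * g (min x y)"

lemma continuous_on_interval: "0 < a \<Longrightarrow> continuous_on {a..b} g"
  using convex_on_continuous[OF _ convex] by (rule continuous_on_subset) auto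

lemma integrable_on_interval: "0 < a \<Longrightarrow> g integrable_on {a..b}"
  by (rule integrable_continuous_real[OF continuous_on_interval])

lemma decreasing: "0 < x \<Longrightarrow> x \<le> y \<Longrightarrow> g y \<le> g x"
  using antimono by (auto simp: monotone_on_def)

lemma primitive_has_derivative:
  assumes "c < u" shows "(primitive has_real_derivative g u) (at u)"
proof -
  have "(primitive has_real_derivative g u) (at u within {c..u+1})"
    unfolding primitive_def using assms base_pos
    by (intro integral_has_real_derivative continuous_on_interval) auto
  moreover have "u \<in> interior {c..u+1}" using assms by auto
  ultimately show ?thesis using at_within_interior by metis
qed

lemma has_derivative_deriv: "0 < u \<Longrightarrow> (g has_real_derivative deriv g u) (at u)"
  using differentiable DERIV_deriv_iff_real_differentiable by blast

lemma above_tangent: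
  assumes "0 < u" "0 < y" shows "deriv g u * (y - u) \<le> g y - g u"
  using assms has_derivative_deriv[of u]
  by (intro convex_on_imp_above_tangent[OF convex])
     (auto intro: has_field_derivative_at_within simp: convex_connected interior_open)

lemma primitive_diff:
  assumes "c \<le> a" "a \<le> b" shows "primitive b - primitive a = integral {a..b} g"
  using Henstock_Kurzweil_Integration.integral_combine[OF assms integrable_on_interval[OF base_pos, of b]]
  unfolding primitive_def by simp

lemma integral_le_left_endpoint:
  assumes "0 < a" "a \<le> b" shows "integral {a..b} g \<le> (b - a) * g a"
proof -
  have "integral {a..b} g \<le> integral {a..b} (\<lambda>_. g a)"
    using assms decreasing by (intro integral_le integrable_on_interval) auto
  then show ?thesis using assms by simp
qed

lemma integral_nonneg_interval: "0 < a \<Longrightarrow> 0 \<le> integral {a..b} g"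
  using pos by (intro integral_nonneg integrable_on_interval) (auto intro: less_imp_le)

lemma potential_sym: "potential x y = potential y x"
  unfolding potential_def by (simp add: min.commute abs_minus_commute)

text \<open>While \<open>x' \<le> y\<close>, the increment \<open>(x' - x) g(y) - (\<Phi>(x', y) - \<Phi>(x, y))\<close> is nondecreasing
  in \<open>x'\<close>: its derivative is \<open>g(y) - g(x') - (y - x') g'(x') \<ge> 0\<close> by convexity.\<close>

lemma potential_increment_below:
  assumes "c < x" "x \<le> x'" "x' \<le> y"
  shows "potential x' y - potential x y \<le> (x' - x) * g y"
proof -
  define F where "F u = u * g y - 2 * primitive u - (y - u) * g u" for u
  have "F x \<le> F x'"
  proof (rule DERIV_nonneg_imp_nondecreasing[OF assms(2)])
    fix u assume u: "x \<le> u" "u \<le> x'"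
    have "(F has_real_derivative g y - g u - (y - u) * deriv g u) (at u)"
      unfolding F_def using u assms base_pos
      by (auto intro!: derivative_eq_intros primitive_has_derivative has_derivative_deriv
               simp: algebra_simps)
    moreover have "g y - g u - (y - u) * deriv g u \<ge> 0"
      using above_tangent[of u y] u assms base_pos by (simp add: algebra_simps)
    ultimately show "\<exists>d. (F has_real_derivative d) (at u) \<and> d \<ge> 0" by blast
  qed
  then show ?thesis using assms unfolding F_def potential_def by (simp add: algebra_simps)
qed

lemma potential_increment_above:
  assumes "y \<le> x" "x \<le> x'"
  shows "potential x' y - potential x y \<le> (x' - x) * g y"
  using assms unfolding potential_def by (simp add: algebra_simps)

lemma potential_increment_fst:
  assumes "c < x" "x \<le> x'" "c < y"
  shows "potential x' y - potential x y \<le> (x' - x) * g y"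
proof -
  consider "x' \<le> y" | "y \<le> x" | "x < y" "y < x'" by linarith
  then show ?thesis
  proof cases
    case 3
    have "potential y y - potential x y \<le> (y - x) * g y"
      using potential_increment_below[of x y y] assms 3 by auto
    moreover have "potential x' y - potential y y \<le> (x' - y) * g y"
      using potential_increment_above[of y y x'] 3 by auto
    ultimately show ?thesis by (simp add: algebra_simps)
  qed (use assms potential_increment_below potential_increment_above in blast)+
qed

lemma potential_increment:
  assumes "c < x" "x \<le> x'" "c < y" "y \<le> y'"
  shows "potential x' y' - potential x y \<le> (x' - x) * g y + (y' - y) * g x"
proof -
  have "potential x' y - potential x y \<le> (x' - x) * g y"
    using potential_increment_fst assms by blast
  moreover have "potential x' y' - potential x' y \<le> (y' - y) * g x'"
    using potential_increment_fst[of y y' x'] assms by (auto simp: potential_sym)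
  moreover have "(y' - y) * g x' \<le> (y' - y) * g x"
    using decreasing[of x x'] assms base_pos by (simp add: mult_left_mono)
  ultimately show ?thesis by linarith
qed

lemma potential_increment_path:
  assumes "\<And>i. i \<le> k \<Longrightarrow> c < x i \<and> c < y i"
    and "\<And>i. i < k \<Longrightarrow> x i \<le> x (Suc i) \<and> y i \<le> y (Suc i)"
  shows "potential (x k) (y k) - potential (x 0) (y 0)
    \<le> (\<Sum>i<k. (x (Suc i) - x i) * g (y i) + (y (Suc i) - y i) * g (x i))"
  using assms
proof (induction k)
  case (Suc k)
  have "potential (x (Suc k)) (y (Suc k)) - potential (x k) (y k)
      \<le> (x (Suc k) - x k) * g (y k) + (y (Suc k) - y k) * g (x k)"
    using Suc.prems by (intro potential_increment) auto
  then show ?case using Suc by simp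
qed simp

lemma potential_lower_bound:
  assumes "c \<le> x" "c \<le> y" "P \<le> x + y" "2 * c \<le> P"
  shows "2 * primitive P - P * g (P/2) \<le> potential x y"
proof -
  define m where "m = P/2"
  define u where "u = min x y"
  have u: "c \<le> u" "x + y - 2 * u = \<bar>x - y\<bar>" using assms unfolding u_def by auto
  have m: "c \<le> m" using assms unfolding m_def by auto
  have potential: "potential x y = 2 * primitive u + \<bar>x - y\<bar> * g u"
    unfolding potential_def u_def by simp
  have "2 * primitive m \<le> potential x y"
  proof (cases "m \<le> u")
    case True
    then have "0 \<le> primitive u - primitive m"
      using primitive_diff[OF m] integral_nonneg_interval m base_pos by auto
    moreover have "0 \<le> \<bar>x - y\<bar> * g u" using pos[of u] u base_pos by simp
    ultimately show ?thesis using potential by linarith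
  next
    case False
    then have "primitive m - primitive u \<le> (m - u) * g u"
      using primitive_diff[OF u(1)] integral_le_left_endpoint[of u m] u base_pos by auto
    moreover have "(P - 2 * u) * g u \<le> \<bar>x - y\<bar> * g u"
      using u assms pos[of u] base_pos by (intro mult_right_mono) auto
    ultimately show ?thesis using potential unfolding m_def by (simp add: algebra_simps)
  qed
  moreover have "primitive P - primitive m \<le> (P - m) * g m"
    using primitive_diff[OF m] integral_le_left_endpoint[of m P] m base_pos
    unfolding m_def by auto
  ultimately show ?thesis unfolding m_def by (simp add: algebra_simps)
qed

end

text \<open>The base point \<open>Q/2\<close> of the primitive lies strictly below the path, so that the
  primitive is differentiable at every point of it.\<close>

lemma monotone_path_weighted_sum_lower_bound:
  fixes g :: "real \<Rightarrow> real" and x y :: "nat \<Rightarrow> real"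
  assumes "\<And>x. x > 0 \<Longrightarrow> g x > 0" "convex_on {0<..} g" "antimono_on {0<..} g"
    and "\<And>x. x > 0 \<Longrightarrow> g differentiable (at x)"
    and "0 < Q" "x 0 = Q" "y 0 = Q" "Q \<le> P" "P \<le> x k + y k"
    and "\<And>i. i < k \<Longrightarrow> x i \<le> x (Suc i) \<and> y i \<le> y (Suc i)"
  shows "2 * integral {Q..P} g - P * g (P/2)
    \<le> (\<Sum>i<k. (x (Suc i) - x i) * g (y i) + (y (Suc i) - y i) * g (x i))"
proof -
  interpret convex_decreasing_weight g "Q/2"
    using assms by unfold_locales auto
  have above: "Q \<le> x i \<and> Q \<le> y i" if "i \<le> k" for i
    using that
  proof (induction i)
    case (Suc i)
    then show ?case using assms(10)[of i] by force
  qed (simp add: assms(6,7))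
  have "potential (x 0) (y 0) = 2 * primitive Q"
    using assms(6,7) by (simp add: potential_def)
  moreover have "primitive P - primitive Q = integral {Q..P} g"
    using assms by (intro primitive_diff) auto
  moreover have "2 * primitive P - P * g (P/2) \<le> potential (x k) (y k)"
    using above[of k] assms by (intro potential_lower_bound) auto
  moreover have "potential (x k) (y k) - potential (x 0) (y 0)
    \<le> (\<Sum>i<k. (x (Suc i) - x i) * g (y i) + (y (Suc i) - y i) * g (x i))"
    using above assms(5,10) by (intro potential_increment_path) (auto, fastforce+)
  ultimately show ?thesis by linarith
qed

text \<open>Of the hypotheses only the monotonicity of the path, its start at \<open>(A, A)\<close>,
  \<open>A \<le> B < a\<^sub>n\<^sub>+\<^sub>1 + b\<^sub>n\<^sub>+\<^sub>1\<close> and the properties of \<open>g\<close> are used; the proof even yields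
  the error term \<open>B g(Bq/2)\<close> instead of \<open>2B g(Bq/2)\<close>.\<close>

theorem lemma8:
  fixes A B :: int and n :: nat and a b :: "nat \<Rightarrow> int"
    and q :: real and g :: "real \<Rightarrow> real"
  assumes "A > 4" and "B > 2 * A" and "n \<ge> 1"
    and "a 0 = A" and "b 0 = A"
    and "\<And>i. i \<le> n \<Longrightarrow> a (Suc i) - a i \<ge> 0"
    and "\<And>i. i \<le> n \<Longrightarrow> b (Suc i) - b i \<ge> 0"
    and "A \<le> min (a 1) (b 1)" and "min (a 1) (b 1) \<le> A + 3"
    and "a n + b n \<le> B" and "a (Suc n) + b (Suc n) > B"
    and "q > 0"
    and "\<And>x. x > 0 \<Longrightarrow> g x > 0"
    and "smooth_on {0<..} g"
    and "convex_on {0<..} g"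
    and "antimono_on {0<..} g"
  shows "(\<Sum>i=0..n. real_of_int (a (Suc i) - a i) * g (real_of_int (b i) * q)
                  + real_of_int (b (Suc i) - b i) * g (real_of_int (a i) * q))
         \<ge> 2 / q * integral {real_of_int A * q .. real_of_int B * q} g
           - 2 * real_of_int B * g (real_of_int B * q / 2)"
  (is "?S \<ge> _")
proof -
  define P where "P = real_of_int B * q"
  have "\<And>x. x > 0 \<Longrightarrow> g differentiable (at x)"
    using assms(14) unfolding smooth_on_def by (metis funpow_0 greaterThan_iff)
  moreover have "real_of_int (a (Suc n)) + real_of_int (b (Suc n)) \<ge> B"
    using assms(11) by linarith
  ultimately have "2 * integral {A * q..P} g - P * g (P/2)
      \<le> (\<Sum>i<Suc n. (a (Suc i) * q - a i * q) * g (b i * q) + (b (Suc i) * q - b i * q) * g (a i * q))"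
    using assms unfolding P_def
    by (intro monotone_path_weighted_sum_lower_bound) (auto simp: distrib_right[symmetric])
  also have "\<dots> = q * ?S"
    by (simp add: atLeast0AtMost lessThan_Suc_atMost sum_distrib_left algebra_simps)
  finally have "(2 * integral {A * q..P} g - P * g (P/2)) / q \<le> ?S"
    using assms(12) by (simp add: divide_le_eq mult.commute)
  moreover have "0 < real_of_int B * g (P/2)"
    using assms(1,2,12,13) unfolding P_def by simp
  moreover have "(2 * integral {A * q..P} g - P * g (P/2)) / q
      = 2 / q * integral {A * q..P} g - real_of_int B * g (P/2)"
    using assms(12) unfolding P_def by (simp add: field_simps)
  ultimately show ?thesis unfolding P_def by linarith
qed

end
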